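(* Let $N>1$ be an integer, $a\in\mathbb{R}$ with $|a|<1$, and $x_n=n/N$ for $n=0,\dots,N$. Let $g:[0,\infty)\to\mathbb{R}$ be bounded, with $g(x)=g(x-1)$ for all $x>1$, such that (1) $g$ is continuous on each of the intervals $[x_0,x_1],(x_1,x_2],\dots,(x_{N-1},x_N]$, and (2) the right limit $g(\tfrac nN+)$ exists for $n=1,\dots,N-1$. Let $f(x)=\sum_{k=0}^\infty a^kg(N^kx)$ for $x\ge0$; this is the solution of $f(x)-af(Nx)=g(x)$. Then $f$ interpolates the data $\{(x_n,y_n)\}_{n=0}^N$, where $$y_0=\frac{g(0)}{1-a},\qquad y_N=\frac{g(1)}{1-a},\qquad y_n=g(x_n)+\frac{a}{1-a}g(1)\ (n=1,\dots,N-1).$$ Moreover, the closure of the graph of $f$ restricted to $[0,1]$ is the unique attractor of the IFS $W=([0,1]\times\mathbb{R};w_1,\dots,w_N)$, where $w_n(x,y)=(L_n(x),ay+g_n(x))$, $L_n(x)=(x+n-1)/N$, and $$g_n(x)=\begin{cases} g(L_n(x)) & \text{if } 0<x<1,\\ g\!\left(\frac{n-1}{N}+\right) & \text{if } x=0,\\ g\!\left(\frac nN\right) & \text{if } x=1.\end{cases}$$ If in addition (3) $g(\tfrac nN+)-g(\tfrac nN)=\frac{a}{1-a}\big(g(1)-g(0)\big)$ for $n=1,\dots,N-1$, then $f$ is continuous on $[0,1]$ and the graph of $f$ restricted to $[0,1]$ is the unique attractor of this IFS.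
   Context: For $n=1$, $g(0+)$ means the right limit at $0$ (equal to $g(0)$ by (1)). The attractor of the IFS $W$ is the unique nonempty compact set $A\subseteq[0,1]\times\mathbb{R}$ with $A=\bigcup_{n=1}^N w_n(A)$. *)

theory Defs
  imports "HOL-Analysis.Analysis"
begin

definition right_lim :: "(real \<Rightarrow> real) \<Rightarrow> real \<Rightarrow> real" where
  "right_lim g x = Lim (at_right x) g"

definition Lmap :: "nat \<Rightarrow> nat \<Rightarrow> real \<Rightarrow> real" where
  "Lmap N n x = (x + real n - 1) / real N"

definition gfun :: "(real \<Rightarrow> real) \<Rightarrow> nat \<Rightarrow> nat \<Rightarrow> real \<Rightarrow> real" where
  "gfun g N n x =
     (if 0 < x \<and> x < 1 then g (Lmap N n x)
      else if x = 0 then right_lim g ((real n - 1) / real N)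
      else g (real n / real N))"

definition wmap :: "(real \<Rightarrow> real) \<Rightarrow> nat \<Rightarrow> real \<Rightarrow> nat \<Rightarrow> real \<times> real \<Rightarrow> real \<times> real" where
  "wmap g N a n p = (Lmap N n (fst p), a * snd p + gfun g N n (fst p))"

definition is_attractor :: "nat \<Rightarrow> (nat \<Rightarrow> real \<times> real \<Rightarrow> real \<times> real) \<Rightarrow> (real \<times> real) set \<Rightarrow> bool" where
  "is_attractor N w A \<longleftrightarrow> A \<noteq> {} \<and> compact A \<and> A \<subseteq> {0..1} \<times> UNIV \<and>
     A = (\<Union>n\<in>{1..N}. w n ` A)"

definition unique_attractor :: "nat \<Rightarrow> (nat \<Rightarrow> real \<times> real \<Rightarrow> real \<times> real) \<Rightarrow> (real \<times> real) set \<Rightarrow> bool" where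
  "unique_attractor N w A \<longleftrightarrow> is_attractor N w A \<and> (\<forall>B. is_attractor N w B \<longrightarrow> B = A)"

end

theory Submission
  imports Defs
begin

(*
  The dilation series f x = (SUM k. a^k g (N^k x)) satisfies f x = g x + a f (N x) and is
  1-periodic on (0, oo) because g is; at the grid points this yields the interpolation values.
  For 0 < t <= 1 the same equation says w_n (t, f t) = (L_n t, f (L_n t)), so the graph of f
  over (0,1] is invariant under the IFS, and its closure, which also contains (0, f 0) by right
  continuity of f at 0, is an attractor. Attractors are unique: the L_n contract [0,1], which
  forces the x-projection of every attractor to be [0,1], and the w_n contract each vertical
  fibre by the factor |a|.

  Under the jump condition (3), g is a continuous 1-periodic function plus the coboundary
  phi y - a phi (N y) of phi = chord o sawtooth, whose dilation series is phi itself. Hence on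
  [0,1] the function f is a uniformly convergent series of continuous functions plus the chord,
  so it is continuous and its graph is compact.
*)

lemma nonneg_dominated_by_contraction_eq_0:
  fixes h :: "'a \<Rightarrow> real"
  assumes bdd: "bdd_above (h ` S)" and nonneg: "\<And>p. p \<in> S \<Longrightarrow> 0 \<le> h p"
    and dominated: "\<And>p. p \<in> S \<Longrightarrow> \<exists>q\<in>S. h p \<le> c * h q"
    and c: "0 \<le> c" "c < 1" and p: "p \<in> S"
  shows "h p = 0"
proof -
  define D where "D = (SUP q\<in>S. h q)"
  have le_D: "h q \<le> D" if "q \<in> S" for q
    unfolding D_def using bdd that by (rule cSUP_upper2) simp
  have "D \<le> c * D"
    unfolding D_def
  proof (rule cSUP_least)
    show "S \<noteq> {}" using p by blast
    fix q assume "q \<in> S"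
    then obtain r where "r \<in> S" "h q \<le> c * h r" using dominated by blast
    then show "h q \<le> c * (SUP q\<in>S. h q)"
      using mult_left_mono[OF le_D[OF \<open>r \<in> S\<close>] c(1)] unfolding D_def by linarith
  qed
  then have "(1 - c) * D \<le> 0" by (simp add: algebra_simps)
  then have "D \<le> 0" using c by (simp add: mult_le_0_iff)
  then show ?thesis using le_D[OF p] nonneg[OF p] by simp
qed

lemma contraction_invariant_subset:
  fixes S T :: "'a::heine_borel set" and w :: "'i \<Rightarrow> 'a \<Rightarrow> 'a"
  assumes T: "closed T" "T \<noteq> {}" and S: "bounded S"
    and cover: "S \<subseteq> (\<Union>i\<in>I. w i ` S)" and invariant: "\<And>i. i \<in> I \<Longrightarrow> w i ` T \<subseteq> T"
    and lipschitz: "\<And>i x y. i \<in> I \<Longrightarrow> dist (w i x) (w i y) \<le> c * dist x y"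
    and c: "0 \<le> c" "c < 1"
  shows "S \<subseteq> T"
proof
  have dominated: "\<exists>q\<in>S. infdist x T \<le> c * infdist q T" if "x \<in> S" for x
  proof -
    from cover that obtain i q where i: "i \<in> I" and q: "q \<in> S" and x: "x = w i q" by blast
    obtain t where t: "t \<in> T" and qt: "infdist q T = dist q t"
      using infdist_attains_inf[OF T] .
    have "infdist x T \<le> dist x (w i t)" using invariant[OF i] t by (intro infdist_le) auto
    also have "\<dots> \<le> c * infdist q T" using lipschitz[OF i] x qt by simp
    finally show ?thesis using q by blast
  qed
  obtain t0 where t0: "t0 \<in> T" using T by blast
  have "bounded (insert t0 S)" using S by simp
  then obtain e where e: "\<And>x y. x \<in> insert t0 S \<Longrightarrow> y \<in> insert t0 S \<Longrightarrow> dist x y \<le> e"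
    unfolding bounded_two_points by blast
  have bdd: "bdd_above ((\<lambda>x. infdist x T) ` S)"
    by (rule bdd_aboveI2[where M=e]) (meson e infdist_le[OF t0] insertI1 insertI2 order_trans)
  fix p assume "p \<in> S"
  have "infdist p T = 0"
    using nonneg_dominated_by_contraction_eq_0[OF bdd _ dominated c \<open>p \<in> S\<close>] infdist_nonneg
    by blast
  then show "p \<in> T" using in_closed_iff_infdist_zero[OF T] by simp
qed

(* The IFS maps are not contractions of the plane, since the g_n need not be Lipschitz,
   but they contract every vertical fibre. *)
lemma fiberwise_contraction_subset:
  fixes S T :: "('a::metric_space \<times> 'b::heine_borel) set" and w :: "'i \<Rightarrow> 'a \<times> 'b \<Rightarrow> 'a \<times> 'b"
  assumes T: "closed T" "bounded T" and S: "bounded S"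
    and cover: "S \<subseteq> (\<Union>i\<in>I. w i ` S)" and invariant: "\<And>i. i \<in> I \<Longrightarrow> w i ` T \<subseteq> T"
    and fst_ST: "fst ` S \<subseteq> fst ` T"
    and fst_w: "\<And>i x y y'. i \<in> I \<Longrightarrow> fst (w i (x, y)) = fst (w i (x, y'))"
    and snd_w: "\<And>i x y y'. i \<in> I \<Longrightarrow> dist (snd (w i (x, y))) (snd (w i (x, y'))) \<le> c * dist y y'"
    and c: "0 \<le> c" "c < 1"
  shows "S \<subseteq> T"
proof
  define F where "F x = Pair x -` T" for x
  have F_closed: "closed (F x)" for x
    unfolding F_def using T by (intro continuous_closed_vimage) (auto intro!: continuous_intros)
  have fiber_point: "\<exists>q\<in>T. fst q = fst p \<and> snd q \<in> F (fst p)" if p: "p \<in> S" for p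
  proof -
    obtain q where "q \<in> T" "fst q = fst p" using fst_ST p by force
    then show ?thesis by (metis F_def prod.collapse vimageI2)
  qed
  define h where "h p = infdist (snd p) (F (fst p))" for p
  have dominated: "\<exists>q\<in>S. h p \<le> c * h q" if "p \<in> S" for p
  proof -
    from cover that obtain i q where i: "i \<in> I" and q: "q \<in> S" and p: "p = w i q" by blast
    obtain z where z: "z \<in> F (fst q)" and qz: "h q = dist (snd q) z"
      using infdist_attains_inf[OF F_closed, of "fst q" "snd q"] fiber_point[OF q]
      unfolding h_def by blast
    have "w i (fst q, z) \<in> T" using invariant[OF i] z by (auto simp: F_def)
    moreover have "fst (w i (fst q, z)) = fst p" using fst_w[OF i] p by (metis prod.collapse)
    ultimately have "snd (w i (fst q, z)) \<in> F (fst p)" by (metis F_def prod.collapse vimageI2)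
    then have "h p \<le> dist (snd p) (snd (w i (fst q, z)))" unfolding h_def by (rule infdist_le)
    also have "\<dots> \<le> c * h q" using snd_w[OF i, of "fst q" "snd q" z] p qz by simp
    finally show ?thesis using q by blast
  qed
  have "bounded (S \<union> T)" using S T by simp
  then obtain e where e: "\<And>x y. x \<in> S \<union> T \<Longrightarrow> y \<in> S \<union> T \<Longrightarrow> dist x y \<le> e"
    unfolding bounded_two_points by blast
  have "h p \<le> e" if p: "p \<in> S" for p
  proof -
    obtain q where "q \<in> T" "snd q \<in> F (fst p)" using fiber_point[OF p] by blast
    then have "h p \<le> dist (snd p) (snd q)" unfolding h_def by (simp add: infdist_le)
    also have "\<dots> \<le> dist p q" by (rule dist_snd_le)
    also have "\<dots> \<le> e" using e p \<open>q \<in> T\<close> by blast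
    finally show ?thesis .
  qed
  then have "bdd_above (h ` S)" by (rule bdd_aboveI2)
  fix p assume p: "p \<in> S"
  have "h p = 0"
    by (rule nonneg_dominated_by_contraction_eq_0[OF _ _ dominated c p])
      (use \<open>bdd_above (h ` S)\<close> in \<open>auto simp: h_def infdist_nonneg\<close>)
  moreover have "F (fst p) \<noteq> {}" using fiber_point[OF p] by blast
  ultimately have "snd p \<in> F (fst p)" unfolding h_def using in_closed_iff_infdist_zero[OF F_closed] by blast
  then show "p \<in> T" by (simp add: F_def)
qed

lemma closure_eq_UN_image_closure:
  fixes S :: "'a::heine_borel set" and w :: "'i \<Rightarrow> 'a \<Rightarrow> 'a"
  assumes S: "bounded S" and I: "finite I"
    and cont: "\<And>i. i \<in> I \<Longrightarrow> continuous_on (closure S) (w i)"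
    and S_eq: "S = (\<Union>i\<in>I. w i ` S)"
  shows "closure S = (\<Union>i\<in>I. w i ` closure S)"
proof
  have "w i ` closure S \<subseteq> closure S" if "i \<in> I" for i
    by (rule image_closure_subset[OF cont[OF that] closed_closure])
      (use S_eq that closure_subset in blast)
  then show "(\<Union>i\<in>I. w i ` closure S) \<subseteq> closure S" by blast
  have "compact (\<Union>i\<in>I. w i ` closure S)"
    using S I cont by (intro compact_UN compact_continuous_image) auto
  moreover have "S \<subseteq> (\<Union>i\<in>I. w i ` closure S)"
    using S_eq closure_subset by blast
  ultimately show "closure S \<subseteq> (\<Union>i\<in>I. w i ` closure S)"
    by (intro closure_minimal) (auto intro: compact_imp_closed)
qed

lemma continuous_on_Icc_if_right_lim:
  fixes g :: "real \<Rightarrow> 'a::metric_space"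
  assumes cd: "c < d" and cont: "continuous_on {c<..d} g" and lim: "(g \<longlongrightarrow> L) (at_right c)"
  shows "continuous_on {c..d} (\<lambda>t. if t = c then L else g t)" (is "continuous_on _ ?h")
proof (rule continuous_on_IccI)
  have "eventually (\<lambda>t. g t = ?h t) (at_right c)"
    using eventually_at_right_less[of c] by eventually_elim auto
  then show "(?h \<longlongrightarrow> ?h c) (at_right c)" using Lim_transform_eventually[OF lim] by simp
  have "continuous_on {(c + d) / 2 .. d} g" by (rule continuous_on_subset[OF cont]) (use cd in auto)
  then have "(g \<longlongrightarrow> g d) (at_left d)" by (rule continuous_on_Icc_at_leftD) (use cd in simp)
  moreover have "eventually (\<lambda>t. g t = ?h t) (at_left d)"
    using eventually_at_left_real[OF cd] by eventually_elim auto
  ultimately show "(?h \<longlongrightarrow> ?h d) (at_left d)" using cd by (simp add: Lim_transform_eventually)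
  fix x assume x: "c < x" "x < d"
  have "isCont g x"
    using continuous_on_subset[OF cont, of "{c<..<d}"] x
    by (auto simp: continuous_on_eq_continuous_at subset_eq)
  moreover have "eventually (\<lambda>t. t \<in> {c<..}) (at x)"
    by (rule eventually_at_in_open') (use x in auto)
  then have "eventually (\<lambda>t. g t = ?h t) (at x)" by eventually_elim auto
  ultimately show "(?h \<longlongrightarrow> ?h x) (at x)" using x by (simp add: isCont_def Lim_transform_eventually)
qed (rule cd)

lemma continuous_on_atLeast_0_if_periodic:
  fixes h :: "real \<Rightarrow> 'a::topological_space"
  assumes cont: "continuous_on {0..1} h" and periodic: "\<And>x. x \<ge> 0 \<Longrightarrow> h (x + 1) = h x"
  shows "continuous_on {0..} h"
proof -
  have shift: "h (x + real m) = h x" if "x \<ge> 0" for x m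
  proof (induction m)
    case (Suc m)
    have "h (x + real (Suc m)) = h ((x + real m) + 1)" by (simp add: algebra_simps)
    also have "\<dots> = h x" using periodic[of "x + real m"] Suc that by simp
    finally show ?case .
  qed simp
  have cont_m: "continuous_on {0..real m} h" for m
  proof (induction m)
    case (Suc m)
    have "continuous_on {real m..real m + 1} (\<lambda>x. h (x - real m))"
      by (rule continuous_on_compose2[OF cont]) (auto intro!: continuous_intros)
    then have "continuous_on {real m..real m + 1} h"
      by (rule continuous_on_eq) (metis diff_add_cancel diff_ge_0_iff_ge atLeastAtMost_iff shift)
    with Suc have "continuous_on ({0..real m} \<union> {real m..real m + 1}) h"
      by (intro continuous_on_closed_Un) auto
    moreover have "{0..real m} \<union> {real m..real m + 1} = {0..real (Suc m)}" by auto
    ultimately show ?case by simp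
  qed simp
  show ?thesis
    unfolding continuous_on_eq_continuous_within
  proof
    fix x :: real assume x: "x \<in> {0..}"
    obtain m where m: "x < real m" using reals_Archimedean2 by blast
    have "at x within {0..} = at x within {0..real m}"
      by (rule at_within_nhd[of x "{..<real m}"]) (use m in auto)
    then show "continuous (at x within {0..}) h"
      using cont_m[of m] x m by (simp add: continuous_on_eq_continuous_within)
  qed
qed

definition sawtooth :: "real \<Rightarrow> real" where
  "sawtooth y = (if y = 0 then 0 else y - of_int \<lceil>y\<rceil> + 1)"

lemma sawtooth_0 [simp]: "sawtooth 0 = 0"
  by (simp add: sawtooth_def)

lemma sawtooth_eq:
  assumes "real m < y" "y \<le> real m + 1"
  shows "sawtooth y = y - real m"
proof -
  have "\<lceil>y\<rceil> = int m + 1" using assms by (simp add: ceiling_eq_iff)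
  then show ?thesis using assms by (simp add: sawtooth_def)
qed

lemma sawtooth_id: "0 \<le> y \<Longrightarrow> y \<le> 1 \<Longrightarrow> sawtooth y = y"
  using sawtooth_eq[of 0 y] by (cases "y = 0") auto

lemma sawtooth_of_nat: "m \<ge> 1 \<Longrightarrow> sawtooth (real m) = 1"
  using sawtooth_eq[of "m - 1" "real m"] by (simp add: of_nat_diff)

lemma sawtooth_shift:
  assumes "y > 0"
  shows "sawtooth (y + real j) = sawtooth y"
proof -
  have "\<lceil>y + real j\<rceil> = \<lceil>y\<rceil> + int j" using ceiling_add_of_int[of y "int j"] by simp
  then show ?thesis using assms by (simp add: sawtooth_def)
qed

lemma sawtooth_range: "y \<ge> 0 \<Longrightarrow> sawtooth y \<in> {0..1}"
  using ceiling_correct[of y] unfolding sawtooth_def by auto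

definition dilation_series :: "real \<Rightarrow> nat \<Rightarrow> (real \<Rightarrow> real) \<Rightarrow> real \<Rightarrow> real" where
  "dilation_series a N g x = (\<Sum>k. a ^ k * g (real N ^ k * x))"

lemma dilation_series_majorant:
  assumes a: "\<bar>a\<bar> < 1" and g: "bounded (g ` {0..})"
  obtains B where "summable (\<lambda>k. B * \<bar>a\<bar> ^ k)"
    and "\<And>k x. x \<ge> 0 \<Longrightarrow> norm (a ^ k * g (real N ^ k * x)) \<le> B * \<bar>a\<bar> ^ k"
proof -
  obtain B where B: "\<And>y. y \<ge> 0 \<Longrightarrow> \<bar>g y\<bar> \<le> B" using g by (auto simp: bounded_iff)
  show ?thesis
  proof (rule that)
    show "summable (\<lambda>k. B * \<bar>a\<bar> ^ k)" using a by (intro summable_mult summable_geometric) simp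
    show "norm (a ^ k * g (real N ^ k * x)) \<le> B * \<bar>a\<bar> ^ k" if "x \<ge> 0" for k x
      using mult_left_mono[OF B[of "real N ^ k * x"], of "\<bar>a\<bar> ^ k"] that
      by (simp add: abs_mult power_abs mult.commute)
  qed
qed

lemma summable_dilation_series:
  fixes g :: "real \<Rightarrow> real"
  assumes "\<bar>a\<bar> < 1" "bounded (g ` {0..})" "x \<ge> 0"
  shows "summable (\<lambda>k. a ^ k * g (real N ^ k * x))"
proof -
  obtain B where B: "summable (\<lambda>k. B * \<bar>a\<bar> ^ k)"
    and le: "\<And>k x. x \<ge> 0 \<Longrightarrow> norm (a ^ k * g (real N ^ k * x)) \<le> B * \<bar>a\<bar> ^ k"
    using dilation_series_majorant[OF assms(1,2), where N=N] by blast
  show ?thesis by (rule summable_comparison_test'[OF B]) (rule le[OF assms(3)])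
qed

lemma dilation_series_eq:
  assumes a: "\<bar>a\<bar> < 1" and g: "bounded (g ` {0..})" and x: "x \<ge> 0"
  shows "dilation_series a N g x = g x + a * dilation_series a N g (real N * x)"
proof -
  have "(\<Sum>k. a ^ Suc k * g (real N ^ Suc k * x)) = dilation_series a N g x - g x"
    using suminf_split_head[OF summable_dilation_series[OF a g x]] by (simp add: dilation_series_def)
  moreover have "(\<Sum>k. a ^ Suc k * g (real N ^ Suc k * x)) = a * dilation_series a N g (real N * x)"
    using suminf_mult[OF summable_dilation_series[OF a g, of "real N * x"], of a] x
    by (simp add: dilation_series_def mult_ac)
  ultimately show ?thesis by simp
qed

lemma dilation_series_const:
  assumes a: "\<bar>a\<bar> < 1" and const: "\<And>k. g (real N ^ k * x) = c"
  shows "dilation_series a N g x = c / (1 - a)"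
proof -
  have "(\<lambda>k. a ^ k * c) sums (c / (1 - a))"
    using sums_mult2[OF geometric_sums[of a], of c] a by simp
  then show ?thesis by (simp add: dilation_series_def const sums_iff)
qed

lemma dilation_series_shift:
  assumes N: "N > 0" and shift: "\<And>y j. y > 0 \<Longrightarrow> g (y + real j) = g y" and x: "x > 0"
  shows "dilation_series a N g (x + real j) = dilation_series a N g x"
proof -
  have "g (real N ^ k * (x + real j)) = g (real N ^ k * x)" for k
    using shift[of "real N ^ k * x" "N ^ k * j"] N x by (simp add: distrib_left)
  then show ?thesis by (simp add: dilation_series_def)
qed

lemma bounded_dilation_series:
  assumes a: "\<bar>a\<bar> < 1" and g: "bounded (g ` {0..})"
  shows "bounded (dilation_series a N g ` {0..})"
proof -
  obtain B where B: "summable (\<lambda>k. B * \<bar>a\<bar> ^ k)"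
    and le: "\<And>k x. x \<ge> 0 \<Longrightarrow> norm (a ^ k * g (real N ^ k * x)) \<le> B * \<bar>a\<bar> ^ k"
    using dilation_series_majorant[OF a g, where N=N] by blast
  have "norm (dilation_series a N g x) \<le> (\<Sum>k. B * \<bar>a\<bar> ^ k)" if "x \<ge> 0" for x
    unfolding dilation_series_def using le[OF that] B by (rule norm_suminf_le)
  then show ?thesis by (auto simp: bounded_iff)
qed

lemma dilation_series_add:
  assumes a: "\<bar>a\<bar> < 1" and g: "bounded (g ` {0..})" and h: "bounded (h ` {0..})" and x: "x \<ge> 0"
  shows "dilation_series a N (\<lambda>y. g y + h y) x = dilation_series a N g x + dilation_series a N h x"
  using suminf_add[OF summable_dilation_series[OF a g x] summable_dilation_series[OF a h x]]
  by (simp add: dilation_series_def distrib_left)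

lemma dilation_series_coboundary:
  assumes a: "\<bar>a\<bar> < 1" and \<phi>: "bounded (\<phi> ` {0..})" and x: "x \<ge> 0"
  shows "dilation_series a N (\<lambda>y. \<phi> y - a * \<phi> (real N * y)) x = \<phi> x"
proof -
  define T where "T k = a ^ k * \<phi> (real N ^ k * x)" for k
  obtain B where B: "summable (\<lambda>k. B * \<bar>a\<bar> ^ k)"
    and le: "\<And>k x. x \<ge> 0 \<Longrightarrow> norm (a ^ k * \<phi> (real N ^ k * x)) \<le> B * \<bar>a\<bar> ^ k"
    using dilation_series_majorant[OF a \<phi>, where N=N] by blast
  have "T \<longlonglongrightarrow> 0"
  proof (rule Lim_null_comparison)
    show "(\<lambda>k. B * \<bar>a\<bar> ^ k) \<longlonglongrightarrow> 0" by (rule summable_LIMSEQ_zero[OF B])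
    show "\<forall>\<^sub>F k in sequentially. norm (T k) \<le> B * \<bar>a\<bar> ^ k"
      by (rule always_eventually) (use le[OF x] in \<open>simp add: T_def\<close>)
  qed
  then have "(\<lambda>k. T k - T (Suc k)) sums T 0" using telescope_sums'[of T 0] by simp
  moreover have "(\<lambda>k. T k - T (Suc k))
      = (\<lambda>k. a ^ k * (\<phi> (real N ^ k * x) - a * \<phi> (real N * (real N ^ k * x))))"
    by (simp add: fun_eq_iff T_def algebra_simps)
  moreover have "T 0 = \<phi> x" by (simp add: T_def)
  ultimately have "(\<lambda>k. a ^ k * (\<phi> (real N ^ k * x) - a * \<phi> (real N * (real N ^ k * x)))) sums \<phi> x"
    by (simp only:)
  then show ?thesis unfolding dilation_series_def by (rule sums_unique[symmetric])
qed

lemma dilation_series_tendsto_at_right_0: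
  fixes g :: "real \<Rightarrow> real"
  assumes N: "N > 0" and a: "\<bar>a\<bar> < 1" and g: "bounded (g ` {0..})"
    and lim: "(g \<longlongrightarrow> g 0) (at_right 0)"
  shows "(dilation_series a N g \<longlongrightarrow> dilation_series a N g 0) (at_right 0)"
proof -
  obtain B where B: "summable (\<lambda>k. B * \<bar>a\<bar> ^ k)"
    and le: "\<And>k x. x \<ge> 0 \<Longrightarrow> norm (a ^ k * g (real N ^ k * x)) \<le> B * \<bar>a\<bar> ^ k"
    using dilation_series_majorant[OF a g, where N=N] by blast
  have term_lim: "((\<lambda>u. a ^ k * g (real N ^ k * u)) \<longlongrightarrow> a ^ k * g 0) (at_right 0)" for k
  proof -
    have "((\<lambda>u. real N ^ k * u) \<longlongrightarrow> 0) (at_right 0)"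
      by (rule tendsto_mult_right_zero) (rule tendsto_ident_at)
    moreover have "eventually (\<lambda>u. real N ^ k * u \<in> {0<..} \<and> real N ^ k * u \<noteq> 0) (at_right 0)"
      using eventually_at_right_less[of 0] by eventually_elim (use N in simp)
    ultimately have "filterlim (\<lambda>u. real N ^ k * u) (at_right 0) (at_right 0)"
      unfolding filterlim_at by blast
    then show ?thesis by (intro tendsto_mult_left filterlim_compose[OF lim])
  qed
  have "eventually (\<lambda>(k, u). norm (a ^ k * g (real N ^ k * u)) \<le> B * \<bar>a\<bar> ^ k)
      (at_top \<times>\<^sub>F at_right 0)"
    unfolding eventually_prod_filter
  proof (intro exI conjI allI impI)
    show "eventually (\<lambda>_. True) at_top" by simp
    show "eventually (\<lambda>u. u > 0) (at_right (0::real))" by (rule eventually_at_right_less)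
  qed (use le in \<open>simp add: less_imp_le\<close>)
  from tannerys_theorem[OF term_lim this B] show ?thesis
    by (simp add: dilation_series_def[abs_def])
qed

lemma continuous_on_dilation_series:
  fixes g :: "real \<Rightarrow> real"
  assumes a: "\<bar>a\<bar> < 1" and g: "bounded (g ` {0..})" and cont: "continuous_on {0..} g"
  shows "continuous_on {0..} (dilation_series a N g)"
proof (rule uniform_limit_theorem)
  obtain B where B: "summable (\<lambda>k. B * \<bar>a\<bar> ^ k)"
    and le: "\<And>k x. x \<ge> 0 \<Longrightarrow> norm (a ^ k * g (real N ^ k * x)) \<le> B * \<bar>a\<bar> ^ k"
    using dilation_series_majorant[OF a g, where N=N] by blast
  show "uniform_limit {0..} (\<lambda>n x. \<Sum>k<n. a ^ k * g (real N ^ k * x)) (dilation_series a N g) sequentially"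
    unfolding dilation_series_def[abs_def] by (rule Weierstrass_m_test[OF le B]) simp
  show "\<forall>\<^sub>F n in sequentially. continuous_on {0..} (\<lambda>x. \<Sum>k<n. a ^ k * g (real N ^ k * x))"
    by (intro always_eventually allI continuous_intros continuous_on_compose2[OF cont]) auto
qed simp

lemma Lmap_eq: "n \<ge> 1 \<Longrightarrow> Lmap N n u = (real (n - 1) + u) / real N"
  by (simp add: Lmap_def of_nat_diff)

lemma dist_Lmap: "dist (Lmap N n x) (Lmap N n y) = dist x y / real N"
  by (simp add: Lmap_def dist_real_def diff_divide_distrib[symmetric] abs_divide)

lemma Lmap_mem:
  assumes "n \<in> {1..N}" "t \<in> {0<..1}"
  shows "Lmap N n t \<in> {0<..1}"
  using assms by (auto simp: Lmap_def field_simps)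

lemma Lmap_cover:
  assumes N: "N > 0" and x: "x \<in> {0<..1}"
  shows "\<exists>n\<in>{1..N}. \<exists>t\<in>{0<..1}. Lmap N n t = x"
proof -
  define n where "n = nat \<lceil>real N * x\<rceil>"
  have n: "real n - 1 < real N * x" "real N * x \<le> real n"
    using x N ceiling_correct[of "real N * x"] by (auto simp: n_def)
  have "0 < real N * x" using x N by simp
  then have "0 < real n" using n(2) by linarith
  moreover have "real N * x \<le> real N" using x N by simp
  then have "n \<le> N" unfolding n_def by (simp add: nat_le_iff ceiling_le_iff)
  ultimately have "n \<in> {1..N}" by simp
  moreover have "real N * x - real n + 1 \<in> {0<..1}" using n by simp
  moreover have "Lmap N n (real N * x - real n + 1) = x" using N by (simp add: Lmap_def)
  ultimately show ?thesis by blast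
qed

lemma Lmap_cover_Icc:
  assumes "N > 0"
  shows "{0..1} \<subseteq> (\<Union>n\<in>{1..N}. Lmap N n ` {0..1})"
proof
  fix x :: real assume x: "x \<in> {0..1}"
  show "x \<in> (\<Union>n\<in>{1..N}. Lmap N n ` {0..1})"
  proof (cases "x = 0")
    case True
    then have "x = Lmap N 1 0" by (simp add: Lmap_def)
    then show ?thesis using assms by force
  next
    case False
    then show ?thesis using Lmap_cover[OF assms, of x] x by fastforce
  qed
qed

lemma is_attractorD:
  assumes "is_attractor N w A"
  shows "A \<noteq> {}" "compact A" "A \<subseteq> {0..1} \<times> UNIV" "A = (\<Union>n\<in>{1..N}. w n ` A)"
  using assms unfolding is_attractor_def by blast+

lemma fst_attractor_wmap:
  assumes N: "N > 1" and A: "is_attractor N (wmap g N a) A"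
  shows "fst ` A = {0..1}"
proof
  show "fst ` A \<subseteq> {0..1}" using is_attractorD(3)[OF A] by auto
  have invariant: "wmap g N a n ` A \<subseteq> A" if "n \<in> {1..N}" for n
    using is_attractorD(4)[OF A] that by blast
  show "{0..1} \<subseteq> fst ` A"
  proof (rule contraction_invariant_subset[where w="Lmap N" and I="{1..N}" and c="1 / real N"])
    show "closed (fst ` A)"
      using is_attractorD(2)[OF A] by (intro compact_imp_closed compact_continuous_image continuous_intros)
    show "fst ` A \<noteq> {}" using is_attractorD(1)[OF A] by blast
    show "{0..1} \<subseteq> (\<Union>n\<in>{1..N}. Lmap N n ` {0..1})" by (rule Lmap_cover_Icc) (use N in simp)
    show "Lmap N n ` fst ` A \<subseteq> fst ` A" if "n \<in> {1..N}" for n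
      using invariant[OF that] by (force simp: wmap_def)
    show "dist (Lmap N n x) (Lmap N n y) \<le> 1 / real N * dist x y" for n x y
      by (simp add: dist_Lmap)
  qed (use N in auto)
qed

lemma attractor_wmap_subset:
  assumes N: "N > 1" and a: "\<bar>a\<bar> < 1"
    and A: "is_attractor N (wmap g N a) A" and B: "is_attractor N (wmap g N a) B"
  shows "A \<subseteq> B"
proof (rule fiberwise_contraction_subset[where w="wmap g N a" and I="{1..N}" and c="\<bar>a\<bar>"])
  show "closed B" "bounded B" using is_attractorD(2)[OF B] by (auto intro: compact_imp_closed compact_imp_bounded)
  show "bounded A" using is_attractorD(2)[OF A] by (rule compact_imp_bounded)
  show "A \<subseteq> (\<Union>n\<in>{1..N}. wmap g N a n ` A)" using is_attractorD(4)[OF A] by blast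
  show "wmap g N a n ` B \<subseteq> B" if "n \<in> {1..N}" for n
    using is_attractorD(4)[OF B] that by blast
  show "fst ` A \<subseteq> fst ` B" by (simp add: fst_attractor_wmap[OF N A] fst_attractor_wmap[OF N B])
  show "fst (wmap g N a n (x, y)) = fst (wmap g N a n (x, y'))" for n x y y'
    by (simp add: wmap_def)
  show "dist (snd (wmap g N a n (x, y))) (snd (wmap g N a n (x, y'))) \<le> \<bar>a\<bar> * dist y y'" for n x y y'
    by (simp add: wmap_def dist_real_def abs_mult right_diff_distrib[symmetric])
qed (use a in auto)

lemma unique_attractor_wmap_iff:
  assumes "N > 1" "\<bar>a\<bar> < 1"
  shows "unique_attractor N (wmap g N a) A \<longleftrightarrow> is_attractor N (wmap g N a) A"
  using attractor_wmap_subset[OF assms] unfolding unique_attractor_def by blast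

locale fractal_interpolation =
  fixes N :: nat and a :: real and g :: "real \<Rightarrow> real"
  assumes N: "N > 1" and a: "\<bar>a\<bar> < 1" and bounded_g: "bounded (g ` {0..})"
    and periodic: "\<And>x. x > 1 \<Longrightarrow> g x = g (x - 1)"
    and continuous_first: "continuous_on {0 .. 1 / real N} g"
    and continuous_later:
      "\<And>n. n \<in> {1..N-1} \<Longrightarrow> continuous_on {real n / real N <.. (real n + 1) / real N} g"
    and right_limits: "\<And>n. n \<in> {1..N-1} \<Longrightarrow> \<exists>L. (g \<longlongrightarrow> L) (at_right (real n / real N))"
begin

abbreviation f :: "real \<Rightarrow> real" where "f \<equiv> dilation_series a N g"

lemma N_pos: "real N > 0"
  using N by simp

lemma g_shift:
  assumes "y > 0"
  shows "g (y + real j) = g y"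
proof (induction j)
  case (Suc j)
  have "g (y + real (Suc j)) = g (y + real j)" using periodic[of "y + real (Suc j)"] assms by simp
  then show ?case using Suc by simp
qed simp

lemma f_shift: "x > 0 \<Longrightarrow> f (x + real j) = f x"
  by (rule dilation_series_shift) (use N g_shift in auto)

lemma f_of_nat:
  assumes m: "m \<ge> 1"
  shows "f (real m) = g 1 / (1 - a)"
proof (rule dilation_series_const[OF a])
  fix k
  have "N ^ k * m \<ge> 1" using N m by (simp add: Suc_le_eq)
  then have "real N ^ k * real m = 1 + real (N ^ k * m - 1)" by (simp add: of_nat_diff)
  then show "g (real N ^ k * real m) = g 1" using g_shift[of 1] by simp
qed

lemma f_0: "f 0 = g 0 / (1 - a)"
  by (rule dilation_series_const[OF a]) simp

lemma f_grid:
  assumes "n \<in> {1..N-1}"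
  shows "f (real n / real N) = g (real n / real N) + a / (1 - a) * g 1"
  using dilation_series_eq[OF a bounded_g, of "real n / real N"] f_of_nat[of n] assms N_pos by simp

lemma g_tendsto_at_right_0: "(g \<longlongrightarrow> g 0) (at_right 0)"
  using continuous_on_Icc_at_rightD[OF continuous_first] N_pos by simp

lemma right_lim_0: "right_lim g 0 = g 0"
  unfolding right_lim_def using g_tendsto_at_right_0 by (intro tendsto_Lim) simp_all

lemma tendsto_right_lim_grid:
  assumes "m < N"
  shows "(g \<longlongrightarrow> right_lim g (real m / real N)) (at_right (real m / real N))"
proof -
  obtain L where L: "(g \<longlongrightarrow> L) (at_right (real m / real N))"
    using g_tendsto_at_right_0 right_limits[of m] assms by (cases "m = 0") force+
  moreover have "right_lim g (real m / real N) = L"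
    unfolding right_lim_def using L by (intro tendsto_Lim) simp_all
  ultimately show ?thesis by simp
qed

definition piece :: "nat \<Rightarrow> real \<Rightarrow> real" where
  "piece m t = (if t = real m / real N then right_lim g (real m / real N) else g t)"

lemma continuous_on_piece:
  assumes "m < N"
  shows "continuous_on {real m / real N .. (real m + 1) / real N} (piece m)"
proof -
  have "continuous_on {real m / real N <.. (real m + 1) / real N} g"
    using continuous_first continuous_later[of m] assms
    by (cases "m = 0") (auto intro: continuous_on_subset)
  from continuous_on_Icc_if_right_lim[OF _ this tendsto_right_lim_grid[OF assms]]
  show ?thesis using N_pos unfolding piece_def[abs_def] by (simp add: divide_strict_right_mono)
qed

lemma gfun_eq_piece:
  assumes n: "n \<in> {1..N}" and u: "u \<in> {0..1}"
  shows "gfun g N n u = piece (n - 1) (Lmap N n u)"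
proof -
  have L: "Lmap N n u = real (n - 1) / real N + u / real N"
    using Lmap_eq[of n N u] n by (simp add: add_divide_distrib)
  have "real (n - 1) = real n - 1" using n by (simp add: of_nat_diff)
  then show ?thesis
    using u N_pos unfolding gfun_def piece_def L by (auto simp: Lmap_def field_simps)
qed

lemma continuous_on_gfun:
  assumes n: "n \<in> {1..N}"
  shows "continuous_on {0..1} (gfun g N n)"
proof -
  have "Lmap N n ` {0..1} \<subseteq> {real (n - 1) / real N .. (real (n - 1) + 1) / real N}"
    using Lmap_eq[of n N] n N_pos by (auto simp: divide_right_mono)
  then have "continuous_on {0..1} (\<lambda>u. piece (n - 1) (Lmap N n u))"
    using n by (intro continuous_on_compose2[OF continuous_on_piece]) (auto simp: Lmap_def intro!: continuous_intros)
  then show ?thesis by (rule continuous_on_eq) (simp add: gfun_eq_piece[OF n])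
qed

lemma continuous_on_wmap:
  assumes "n \<in> {1..N}"
  shows "continuous_on ({0..1} \<times> UNIV) (wmap g N a n)"
  unfolding wmap_def Lmap_def
  by (intro continuous_intros continuous_on_compose2[OF continuous_on_gfun[OF assms]]) (use N in auto)

lemma wmap_graph:
  assumes n: "n \<in> {1..N}" and t: "t \<in> {0<..1}"
  shows "wmap g N a n (t, f t) = (Lmap N n t, f (Lmap N n t))"
proof -
  have "real N * Lmap N n t = t + real (n - 1)" using n N_pos by (simp add: Lmap_eq)
  then have "f (Lmap N n t) = g (Lmap N n t) + a * f t"
    using dilation_series_eq[OF a bounded_g, of "Lmap N n t"] Lmap_mem[OF n t] f_shift[of t "n - 1"] t
    by simp
  moreover have "gfun g N n t = g (Lmap N n t)"
    using t by (cases "t = 1") (auto simp: gfun_def Lmap_def)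
  ultimately show ?thesis by (simp add: wmap_def)
qed

lemma graph_eq_UN_wmap_image:
  "(\<lambda>x. (x, f x)) ` {0<..1} = (\<Union>n\<in>{1..N}. wmap g N a n ` (\<lambda>x. (x, f x)) ` {0<..1})"
proof
  show "(\<lambda>x. (x, f x)) ` {0<..1} \<subseteq> (\<Union>n\<in>{1..N}. wmap g N a n ` (\<lambda>x. (x, f x)) ` {0<..1})"
  proof clarify
    fix x :: real assume "x \<in> {0<..1}"
    then obtain n t where n: "n \<in> {1..N}" and t: "t \<in> {0<..1}" and x: "Lmap N n t = x"
      using Lmap_cover[of N x] N by auto
    have "(x, f x) = wmap g N a n (t, f t)" using wmap_graph[OF n t] x by simp
    moreover have "(t, f t) \<in> (\<lambda>x. (x, f x)) ` {0<..1}" using t by blast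
    ultimately show "(x, f x) \<in> (\<Union>n\<in>{1..N}. wmap g N a n ` (\<lambda>x. (x, f x)) ` {0<..1})"
      using n by blast
  qed
  show "(\<Union>n\<in>{1..N}. wmap g N a n ` (\<lambda>x. (x, f x)) ` {0<..1}) \<subseteq> (\<lambda>x. (x, f x)) ` {0<..1}"
    using wmap_graph Lmap_mem by auto
qed

lemma closure_graph_Icc:
  "closure ((\<lambda>x. (x, f x)) ` {0..1}) = closure ((\<lambda>x. (x, f x)) ` {0<..1})"
proof -
  have "((\<lambda>u. (u, f u)) \<longlongrightarrow> (0, f 0)) (at_right 0)"
    using dilation_series_tendsto_at_right_0[OF _ a bounded_g g_tendsto_at_right_0] N
    by (intro tendsto_Pair tendsto_ident_at) simp_all
  moreover have "eventually (\<lambda>u. u \<in> {0<..<1}) (at_right (0::real))"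
    by (rule eventually_at_right_real) simp
  then have "eventually (\<lambda>u. (u, f u) \<in> closure ((\<lambda>x. (x, f x)) ` {0<..1})) (at_right 0)"
    by eventually_elim (auto intro: closure_subset[THEN subsetD])
  ultimately have "(0, f 0) \<in> closure ((\<lambda>x. (x, f x)) ` {0<..1})"
    by (intro Lim_in_closed_set[of _ _ "at_right 0"]) simp_all
  then have "(\<lambda>x. (x, f x)) ` {0..1} \<subseteq> closure ((\<lambda>x. (x, f x)) ` {0<..1})"
    using closure_subset by (force simp: less_eq_real_def)
  then have "closure ((\<lambda>x. (x, f x)) ` {0..1}) \<subseteq> closure ((\<lambda>x. (x, f x)) ` {0<..1})"
    by (rule closure_minimal) simp
  moreover have "closure ((\<lambda>x. (x, f x)) ` {0<..1}) \<subseteq> closure ((\<lambda>x. (x, f x)) ` {0..1})"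
    by (intro closure_mono image_mono) auto
  ultimately show ?thesis by (rule antisym)
qed

lemma is_attractor_closure_graph: "is_attractor N (wmap g N a) (closure ((\<lambda>x. (x, f x)) ` {0..1}))"
proof -
  let ?G = "(\<lambda>x. (x, f x)) ` {0<..1}"
  have "?G \<subseteq> {0..1} \<times> f ` {0..}" by auto
  then have bounded: "bounded ?G"
    using bounded_dilation_series[OF a bounded_g, of N]
    by (intro bounded_subset[OF bounded_Times]) auto
  have sub: "closure ?G \<subseteq> {0..1} \<times> UNIV"
    by (rule closure_minimal) (auto intro: closed_Times)
  have "closure ?G = (\<Union>n\<in>{1..N}. wmap g N a n ` closure ?G)"
    using bounded graph_eq_UN_wmap_image continuous_on_subset[OF continuous_on_wmap sub]
    by (intro closure_eq_UN_image_closure) auto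
  moreover have "closure ?G \<noteq> {}" by auto
  ultimately show ?thesis
    unfolding is_attractor_def closure_graph_Icc using bounded sub by auto
qed

end

locale fractal_interpolation_matched_jumps = fractal_interpolation +
  assumes jumps: "\<And>n. n \<in> {1..N-1} \<Longrightarrow>
    right_lim g (real n / real N) - g (real n / real N) = a / (1 - a) * (g 1 - g 0)"
begin

definition chord :: "real \<Rightarrow> real" where
  "chord t = (g 0 + (g 1 - g 0) * t) / (1 - a)"

(* chord is the line through the interpolation points (0, y_0) and (1, y_N). Subtracting the
   coboundary of chord o sawtooth removes exactly the jumps of g allowed by condition (3):
   sawtooth (N y) drops from 1 to 0 just right of each grid point. *)
definition g_reduced :: "real \<Rightarrow> real" where
  "g_reduced y = g y - (chord (sawtooth y) - a * chord (sawtooth (real N * y)))"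

lemma bounded_chord_sawtooth: "bounded ((\<lambda>y. chord (sawtooth y)) ` {0..})"
proof -
  have "compact (chord ` {0..1})"
    unfolding chord_def using a by (intro compact_continuous_image continuous_intros) auto
  moreover have "(\<lambda>y. chord (sawtooth y)) ` {0..} \<subseteq> chord ` {0..1}"
    using sawtooth_range by auto
  ultimately show ?thesis by (meson bounded_subset compact_imp_bounded)
qed

lemma bounded_chord_coboundary:
  "bounded ((\<lambda>y. chord (sawtooth y) - a * chord (sawtooth (real N * y))) ` {0..})"
proof -
  have "compact ((\<lambda>(u, v). u - a * v) ` (chord ` {0..1} \<times> chord ` {0..1}))"
    unfolding chord_def case_prod_unfold using a
    by (intro compact_continuous_image compact_Times continuous_intros) auto
  moreover have "(\<lambda>y. chord (sawtooth y) - a * chord (sawtooth (real N * y))) ` {0..}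
      \<subseteq> (\<lambda>(u, v). u - a * v) ` (chord ` {0..1} \<times> chord ` {0..1})"
    using sawtooth_range by fastforce
  ultimately show ?thesis by (meson bounded_subset compact_imp_bounded)
qed

lemma g_reduced_piece:
  assumes m: "m < N" and t: "t \<in> {real m / real N .. (real m + 1) / real N}"
  shows "g_reduced t = piece m t - chord t + a * chord (real N * t - real m)"
proof -
  have "(real m + 1) / real N \<le> 1" using m N_pos by simp
  then have "sawtooth t = t" using t by (intro sawtooth_id) (auto intro: order_trans[rotated])
  consider "t = 0" "m = 0" | "t = real m / real N" "m \<ge> 1" | "t \<noteq> real m / real N"
    by force
  then show ?thesis
  proof cases
    case 1
    then show ?thesis by (simp add: g_reduced_def piece_def right_lim_0)
  next
    case 2
    then have Nt: "real N * t = real m" using N_pos by simp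
    have "a / (1 - a) * (g 1 - g 0) = a * (chord 1 - chord 0)"
      by (simp add: chord_def diff_divide_distrib[symmetric])
    then have "piece m t = g t + a * (chord 1 - chord 0)"
      using jumps[of m] 2 m by (simp add: piece_def algebra_simps)
    then show ?thesis
      using 2 Nt \<open>sawtooth t = t\<close> by (simp add: g_reduced_def sawtooth_of_nat algebra_simps)
  next
    case 3
    then have "real m < real N * t" "real N * t \<le> real m + 1"
      using t N_pos by (auto simp: field_simps)
    then show ?thesis
      using 3 \<open>sawtooth t = t\<close> by (simp add: g_reduced_def piece_def sawtooth_eq)
  qed
qed

lemma continuous_on_g_reduced_Icc: "continuous_on {0..1} g_reduced"
proof -
  have "continuous_on {0 .. real j / real N} g_reduced" if "j \<le> N" for j
    using that
  proof (induction j)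
    case (Suc j)
    have "continuous_on {real j / real N .. (real j + 1) / real N}
        (\<lambda>t. piece j t - chord t + a * chord (real N * t - real j))"
      using Suc.prems a unfolding chord_def by (intro continuous_intros continuous_on_piece) auto
    then have "continuous_on {real j / real N .. (real j + 1) / real N} g_reduced"
      by (rule continuous_on_eq) (use Suc.prems in \<open>simp add: g_reduced_piece Suc_le_eq\<close>)
    then have "continuous_on ({0 .. real j / real N} \<union> {real j / real N .. (real j + 1) / real N})
        g_reduced"
      using Suc by (intro continuous_on_closed_Un) auto
    moreover have "{0 .. real j / real N} \<union> {real j / real N .. (real j + 1) / real N}
        = {0 .. (real j + 1) / real N}"
      using N_pos by (intro ivl_disj_un_two_touch(4)) (auto simp: divide_right_mono)
    ultimately show ?case by (simp add: add.commute)
  qed simp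
  from this[of N] show ?thesis using N_pos by simp
qed

lemma g_reduced_periodic:
  assumes "x \<ge> 0"
  shows "g_reduced (x + 1) = g_reduced x"
proof (cases "x = 0")
  case True
  have chord_scaled: "(1 - a) * chord t = g 0 + (g 1 - g 0) * t" for t
    using a by (simp add: chord_def)
  have "g_reduced 0 = g 0 - (1 - a) * chord 0" "g_reduced 1 = g 1 - (1 - a) * chord 1"
    using N sawtooth_of_nat[of 1] sawtooth_of_nat[of N] by (simp_all add: g_reduced_def algebra_simps)
  then have "g_reduced 0 = 0" "g_reduced 1 = 0" by (simp_all add: chord_scaled)
  then show ?thesis using True by simp
next
  case False
  then have "x > 0" using assms by simp
  then show ?thesis
    using g_shift[of x 1] sawtooth_shift[of x 1] sawtooth_shift[of "real N * x" N] N_pos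
    by (simp add: g_reduced_def distrib_left)
qed

lemma continuous_on_f: "continuous_on {0..1} f"
proof -
  let ?\<phi> = "\<lambda>y. chord (sawtooth y)"
  have bounded_reduced: "bounded (g_reduced ` {0..})"
    unfolding g_reduced_def by (rule bounded_minus_comp[OF bounded_g bounded_chord_coboundary])
  have "continuous_on {0..} g_reduced"
    using continuous_on_g_reduced_Icc g_reduced_periodic by (rule continuous_on_atLeast_0_if_periodic)
  then have cont: "continuous_on {0..1} (\<lambda>x. dilation_series a N g_reduced x + chord x)"
    unfolding chord_def using a
    by (intro continuous_intros
        continuous_on_subset[OF continuous_on_dilation_series[OF a bounded_reduced]]) auto
  have decomposition: "f x = dilation_series a N g_reduced x + chord x" if x: "x \<in> {0..1}" for x
  proof -
    have "f x = dilation_series a N (\<lambda>y. g_reduced y + (?\<phi> y - a * ?\<phi> (real N * y))) x"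
      by (simp add: g_reduced_def)
    also have "\<dots> = dilation_series a N g_reduced x + ?\<phi> x"
      using x dilation_series_coboundary[OF a bounded_chord_sawtooth, of x N]
      by (simp add: dilation_series_add[OF a bounded_reduced bounded_chord_coboundary])
    finally show ?thesis using x by (simp add: sawtooth_id)
  qed
  show ?thesis by (rule continuous_on_eq[OF cont]) (simp add: decomposition)
qed

end

theorem theorem4p2:
  fixes N :: nat and a :: real and g f :: "real \<Rightarrow> real"
  assumes N: "N > 1"
    and a: "\<bar>a\<bar> < 1"
    and bdd: "bounded (g ` {0..})"
    and per: "\<And>x. x > 1 \<Longrightarrow> g x = g (x - 1)"
    and cont0: "continuous_on {0 .. 1 / real N} g"
    and cont: "\<And>n. n \<in> {1..N-1} \<Longrightarrow> continuous_on {real n / real N <.. (real n + 1) / real N} g"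
    and rlim: "\<And>n. n \<in> {1..N-1} \<Longrightarrow> \<exists>L. (g \<longlongrightarrow> L) (at_right (real n / real N))"
    and f_def: "f = (\<lambda>x. \<Sum>k. a ^ k * g (real N ^ k * x))"
  shows "f 0 = g 0 / (1 - a)
       \<and> f 1 = g 1 / (1 - a)
       \<and> (\<forall>n\<in>{1..N-1}. f (real n / real N) = g (real n / real N) + a / (1 - a) * g 1)
       \<and> unique_attractor N (wmap g N a) (closure ((\<lambda>x. (x, f x)) ` {0..1}))
       \<and> ((\<forall>n\<in>{1..N-1}. right_lim g (real n / real N) - g (real n / real N)
                          = a / (1 - a) * (g 1 - g 0))
          \<longrightarrow> continuous_on {0..1} f
              \<and> unique_attractor N (wmap g N a) ((\<lambda>x. (x, f x)) ` {0..1}))"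
proof -
  interpret fractal_interpolation N a g
    using N a bdd per cont0 cont rlim by unfold_locales
  have f_eq: "f = dilation_series a N g"
    unfolding f_def dilation_series_def ..
  have unique: "unique_attractor N (wmap g N a) A \<longleftrightarrow> is_attractor N (wmap g N a) A" for A
    using unique_attractor_wmap_iff[OF N a] .
  have matched_jumps: "continuous_on {0..1} f \<and> unique_attractor N (wmap g N a) ((\<lambda>x. (x, f x)) ` {0..1})"
    if jumps: "\<forall>n\<in>{1..N-1}. right_lim g (real n / real N) - g (real n / real N)
                          = a / (1 - a) * (g 1 - g 0)"
  proof -
    interpret fractal_interpolation_matched_jumps N a g
      using jumps by unfold_locales blast
    have "compact ((\<lambda>x. (x, f x)) ` {0..1})"
      using continuous_on_f unfolding f_eq by (intro compact_continuous_image continuous_intros) auto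
    then have "closure ((\<lambda>x. (x, f x)) ` {0..1}) = (\<lambda>x. (x, f x)) ` {0..1}"
      by (simp add: compact_imp_closed)
    then show ?thesis
      using continuous_on_f is_attractor_closure_graph unfolding unique f_eq by simp
  qed
  show ?thesis
    using f_0 f_of_nat[of 1] f_grid is_attractor_closure_graph matched_jumps
    unfolding unique f_eq by simp
qed

end
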